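(* Let $G$ be a finite group. Then the power graph $\mathscr{G}(G)$ is overfull if and only if $G$ is cyclic of order $p^a$ for some odd prime $p$ and integer $a \geq 1$.
   Context: For a finite group $G$, the power graph $\mathscr{G}(G)$ is the simple graph with vertex set the elements of $G$, in which two distinct elements $a,b$ are adjacent if and only if one is a power of the other. For a finite simple graph $\Gamma$ on $n$ vertices with maximum vertex degree $\Delta(\Gamma)$, $\Gamma$ is called overfull if $|E(\Gamma)| / \lfloor n/2 \rfloor > \Delta(\Gamma)$. *)

theory Defs
  imports Complex_Main "HOL-Computational_Algebra.Primes" "HOL-Algebra.Elementary_Groups"
begin

definition power_adj :: "('a, 'b) monoid_scheme \<Rightarrow> 'a \<Rightarrow> 'a \<Rightarrow> bool" where
  "power_adj G a b \<longleftrightarrow> a \<in> carrier G \<and> b \<in> carrier G \<and> a \<noteq> b \<and>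
     ((\<exists>k::int. a = b [^]\<^bsub>G\<^esub> k) \<or> (\<exists>k::int. b = a [^]\<^bsub>G\<^esub> k))"

definition power_graph_edges :: "('a, 'b) monoid_scheme \<Rightarrow> 'a set set" where
  "power_graph_edges G = {{a, b} | a b. power_adj G a b}"

definition power_graph_degree :: "('a, 'b) monoid_scheme \<Rightarrow> 'a \<Rightarrow> nat" where
  "power_graph_degree G a = card {b. power_adj G a b}"

definition power_graph_max_degree :: "('a, 'b) monoid_scheme \<Rightarrow> nat" where
  "power_graph_max_degree G = Max (power_graph_degree G ` carrier G)"

definition power_graph_overfull :: "('a, 'b) monoid_scheme \<Rightarrow> bool" where
  "power_graph_overfull G \<longleftrightarrow>
     real (card (power_graph_edges G)) / real (card (carrier G) div 2)
       > real (power_graph_max_degree G)"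

end

theory Submission
  imports Defs "HOL-Algebra.Multiplicative_Group"
begin

(* The identity is a power of every element, so the maximum degree is n - 1, and with N the
   number of non-adjacent pairs the power graph is overfull iff n is odd and 2 N < n - 1.
   In a non-cyclic group an element x of maximal order is adjacent to no element outside the
   proper subgroup <x>, so N >= n/2.  In a cyclic group of order A B with coprime A, B > 1, the
   nontrivial elements of the subgroups of orders A and B are pairwise non-adjacent, so
   N >= (A - 1)(B - 1), which is too many once A, B >= 3.  In a cyclic p-group the subgroups
   form a chain, so the power graph is complete. *)

lemma edge_count_overfull_iff:
  fixes n M N :: nat
  assumes "n \<ge> 1" and "M + N = n choose 2"
  shows "real M / real (n div 2) > real (n - 1) \<longleftrightarrow> odd n \<and> 2 * N < n - 1"
proof (cases "even n")
  case True
  then obtain q where q: "n = 2 * q" and "q \<ge> 1"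
    using assms(1) by auto
  then have "M \<le> q * (n - 1)"
    using assms(2) by (simp add: choose_two)
  then have "real M \<le> real (n - 1) * real q"
    by (metis of_nat_le_iff of_nat_mult mult.commute)
  then have "real M / real (n div 2) \<le> real (n - 1)"
    using q \<open>q \<ge> 1\<close> by (simp add: divide_le_eq)
  then show ?thesis
    using True by simp
next
  case False
  then obtain q where q: "n = 2 * q + 1"
    using oddE by blast
  have "M + N = q * n"
    using assms(2) q by (simp add: choose_two)
  show ?thesis
  proof (cases "q = 0")
    case False
    have "real M / real q > real (n - 1) \<longleftrightarrow> real M > real (n - 1) * real q"
      using False by (simp add: pos_less_divide_eq)
    also have "\<dots> \<longleftrightarrow> M > (n - 1) * q"
      by (metis of_nat_less_iff of_nat_mult)
    also have "\<dots> \<longleftrightarrow> 2 * N < n - 1"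
      using \<open>M + N = q * n\<close> q by (simp add: algebra_simps, linarith)
    finally show ?thesis
      using q \<open>odd n\<close> by simp
  qed (use q in simp)
qed

lemma proper_dvd_imp_double_le:
  fixes d n :: nat
  assumes "d dvd n" "d < n"
  shows "2 * d \<le> n"
proof -
  obtain k where k: "n = d * k"
    using assms(1) by blast
  with assms(2) have "2 \<le> k"
    by (cases k) auto
  then show ?thesis
    unfolding k by (metis mult.commute mult_le_mono2)
qed

lemma dvd_prime_power_dvd_total:
  fixes p :: nat
  assumes "prime p" "d dvd p ^ k" "e dvd p ^ k"
  shows "d dvd e \<or> e dvd d"
proof -
  obtain s t where "d = p ^ s" "e = p ^ t"
    using assms divides_primepow_nat by meson
  then show ?thesis
    by (metis le_imp_power_dvd nat_le_linear)
qed

lemma not_prime_power_imp_coprime_factors: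
  fixes n :: nat
  assumes "n > 1" and "\<nexists>p k. prime p \<and> n = p ^ k"
  obtains A B where "n = A * B" "coprime A B" "A > 1" "B > 1"
proof -
  obtain p where p: "prime p" "p dvd n"
    using prime_factor_nat[of n] assms(1) by auto
  have "n \<noteq> 0" "\<not> is_unit p"
    using assms(1) p(1) by (auto simp: not_prime_unit)
  then obtain B where B: "n = p ^ multiplicity p n * B" "\<not> p dvd B"
    by (rule multiplicity_decompose')
  have "B \<noteq> 0"
    using B(1) \<open>n \<noteq> 0\<close> by (metis mult_0_right)
  moreover have "B \<noteq> 1"
    using B(1) assms(2) p(1) by auto
  ultimately have "B > 1"
    by linarith
  have "multiplicity p n \<noteq> 0"
    using B p(2) by (metis mult_1 power_0)
  then have "p ^ multiplicity p n > 1"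
    using one_less_power[OF prime_gt_1_nat[OF p(1)]] by simp
  moreover have "coprime (p ^ multiplicity p n) B"
    using p(1) B(2) by (simp add: prime_imp_coprime)
  ultimately show ?thesis
    using that B(1) \<open>B > 1\<close> by blast
qed

definition power_graph_nonedges :: "('a, 'b) monoid_scheme \<Rightarrow> 'a set set" where
  "power_graph_nonedges G =
     {{a, b} | a b. a \<in> carrier G \<and> b \<in> carrier G \<and> a \<noteq> b \<and> \<not> power_adj G a b}"

lemma power_adj_sym: "power_adj G a b \<longleftrightarrow> power_adj G b a"
  unfolding power_adj_def by blast

lemma power_graph_edges_Un_nonedges:
  "power_graph_edges G \<union> power_graph_nonedges G = {B. B \<subseteq> carrier G \<and> card B = 2}"
proof (intro equalityI subsetI)
  fix B assume "B \<in> power_graph_edges G \<union> power_graph_nonedges G"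
  then obtain a b where "B = {a, b}" "a \<in> carrier G" "b \<in> carrier G" "a \<noteq> b"
    unfolding power_graph_edges_def power_graph_nonedges_def power_adj_def by blast
  then show "B \<in> {B. B \<subseteq> carrier G \<and> card B = 2}"
    by simp
next
  fix B assume "B \<in> {B. B \<subseteq> carrier G \<and> card B = 2}"
  then obtain a b where "B = {a, b}" "a \<in> carrier G" "b \<in> carrier G" "a \<noteq> b"
    by (auto simp: card_2_iff)
  then show "B \<in> power_graph_edges G \<union> power_graph_nonedges G"
    unfolding power_graph_edges_def power_graph_nonedges_def by blast
qed

lemma power_graph_edges_Int_nonedges:
  "power_graph_edges G \<inter> power_graph_nonedges G = {}"
  unfolding power_graph_edges_def power_graph_nonedges_def
  by (auto simp: doubleton_eq_iff power_adj_sym)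

lemma finite_power_graph_edges_nonedges:
  assumes "finite (carrier G)"
  shows "finite (power_graph_edges G)" "finite (power_graph_nonedges G)"
proof -
  have "finite (power_graph_edges G \<union> power_graph_nonedges G)"
    unfolding power_graph_edges_Un_nonedges using assms by simp
  then show "finite (power_graph_edges G)" "finite (power_graph_nonedges G)"
    by simp_all
qed

lemma card_power_graph_edges_add_nonedges:
  assumes "finite (carrier G)"
  shows "card (power_graph_edges G) + card (power_graph_nonedges G) = card (carrier G) choose 2"
proof -
  have "card (power_graph_edges G) + card (power_graph_nonedges G)
      = card {B. B \<subseteq> carrier G \<and> card B = 2}"
    using finite_power_graph_edges_nonedges[OF assms]
    by (simp flip: card_Un_disjoint power_graph_edges_Un_nonedges add: power_graph_edges_Int_nonedges)
  then show ?thesis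
    using n_subsets[OF assms] by simp
qed

lemma card_le_power_graph_nonedges:
  assumes "finite (carrier G)" and "X \<subseteq> carrier G" "Y \<subseteq> carrier G" "X \<inter> Y = {}"
    and "\<And>x y. x \<in> X \<Longrightarrow> y \<in> Y \<Longrightarrow> \<not> power_adj G x y"
  shows "card X * card Y \<le> card (power_graph_nonedges G)"
proof -
  have "finite (power_graph_nonedges G)"
    by (rule finite_power_graph_edges_nonedges[OF assms(1)])
  moreover have "{x, y} \<in> power_graph_nonedges G" if "x \<in> X" "y \<in> Y" for x y
    using that assms(2-5) unfolding power_graph_nonedges_def by blast
  then have "(\<lambda>(x, y). {x, y}) ` (X \<times> Y) \<subseteq> power_graph_nonedges G"
    by auto
  moreover have "inj_on (\<lambda>(x, y). {x, y}) (X \<times> Y)"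
    using assms(4) by (auto simp: inj_on_def doubleton_eq_iff)
  ultimately show ?thesis
    by (metis card_cartesian_product card_image card_mono)
qed

lemma (in group) power_adj_iff_generate:
  assumes "a \<in> carrier G" "b \<in> carrier G"
  shows "power_adj G a b \<longleftrightarrow> a \<noteq> b \<and> (a \<in> generate G {b} \<or> b \<in> generate G {a})"
  using assms unfolding power_adj_def generate_pow[OF assms(1)] generate_pow[OF assms(2)] by blast

lemma (in group) generate_singleton_subset:
  assumes "x \<in> carrier G" "z \<in> generate G {x}"
  shows "generate G {z} \<subseteq> generate G {x}"
  using assms by (intro generate_subgroup_incl generate_is_subgroup) auto

lemma (in group) cyclic_group_iff_generate:
  "cyclic_group G \<longleftrightarrow> (\<exists>g \<in> carrier G. generate G {g} = carrier G)"
proof -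
  have "generate G {g} = range (\<lambda>k::int. g [^] k)" if "g \<in> carrier G" for g
    using generate_pow[OF that] by auto
  then show ?thesis
    unfolding cyclic_group by (metis (no_types, lifting))
qed

lemma (in group) power_graph_max_degree:
  assumes "finite (carrier G)"
  shows "power_graph_max_degree G = card (carrier G) - 1"
proof -
  have "{b. power_adj G a b} \<subseteq> carrier G - {a}" for a
    unfolding power_adj_def by auto
  then have deg_le: "power_graph_degree G a \<le> card (carrier G - {a})" for a
    unfolding power_graph_degree_def using assms by (intro card_mono) auto
  have le: "power_graph_degree G a \<le> card (carrier G) - 1" if "a \<in> carrier G" for a
    using deg_le[of a] card_Diff_singleton[OF that] by simp
  have "{b. power_adj G \<one> b} = {b \<in> carrier G. power_adj G \<one> b}"
    unfolding power_adj_def by auto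
  also have "\<dots> = carrier G - {\<one>}"
    by (auto simp: power_adj_iff_generate intro: generate.one)
  finally have one: "power_graph_degree G \<one> = card (carrier G) - 1"
    unfolding power_graph_degree_def by simp
  show ?thesis
    unfolding power_graph_max_degree_def
  proof (rule antisym)
    show "Max (power_graph_degree G ` carrier G) \<le> card (carrier G) - 1"
      using assms le by (intro Max.boundedI) auto
    show "card (carrier G) - 1 \<le> Max (power_graph_degree G ` carrier G)"
      unfolding one[symmetric] using assms by (intro Max_ge) auto
  qed
qed

lemma (in group) power_graph_overfull_iff:
  assumes fin: "finite (carrier G)"
  shows "power_graph_overfull G \<longleftrightarrow>
    odd (card (carrier G)) \<and> 2 * card (power_graph_nonedges G) < card (carrier G) - 1"
proof -
  have "card (carrier G) \<ge> 1"
    using fin order_gt_0_iff_finite by (simp add: order_def Suc_le_eq)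
  then show ?thesis
    unfolding power_graph_overfull_def power_graph_max_degree[OF fin]
    using edge_count_overfull_iff card_power_graph_edges_add_nonedges[OF fin] by blast
qed

lemma (in group) ord_dvd_ord_of_mem_generate:
  assumes "x \<in> carrier G" "z \<in> generate G {x}"
  shows "ord z dvd ord x"
proof -
  obtain i :: int where z: "z = x [^] i"
    using assms unfolding generate_pow[OF assms(1)] by blast
  have "z [^] int (ord x) = x [^] (i * int (ord x))"
    unfolding z by (rule int_pow_pow[OF assms(1)])
  also have "\<dots> = \<one>"
    using assms(1) by (simp add: int_pow_eq_id)
  finally have "z [^] ord x = \<one>"
    by (simp add: int_pow_int)
  moreover have "z \<in> carrier G"
    using assms generate_incl by blast
  ultimately show ?thesis
    by (simp add: pow_eq_id)
qed

lemma (in group) generate_Int_generate_coprime_ord: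
  assumes "a \<in> carrier G" "b \<in> carrier G" "coprime (ord a) (ord b)"
  shows "generate G {a} \<inter> generate G {b} = {\<one>}"
proof (intro equalityI subsetI)
  fix z assume z: "z \<in> generate G {a} \<inter> generate G {b}"
  then have "ord z dvd ord a" "ord z dvd ord b"
    using assms ord_dvd_ord_of_mem_generate by auto
  then have "ord z = 1"
    by (intro coprime_common_divisor_nat[OF assms(3)])
  moreover have "z \<in> carrier G"
    using z assms(1) generate_incl by blast
  ultimately show "z \<in> {\<one>}"
    by (metis ord_eq_1 singletonI)
qed (auto intro: generate.one)

lemma (in group) not_power_adj_outside_generate_max_ord:
  assumes z: "z \<in> carrier G" "z \<notin> generate G {x}"
    and fin: "finite (carrier G)" and x: "x \<in> carrier G"
    and ord_max: "\<And>y. y \<in> carrier G \<Longrightarrow> ord y \<le> ord x"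
  shows "\<not> power_adj G z x"
proof
  assume "power_adj G z x"
  then have "x \<in> generate G {z}"
    using z x by (simp add: power_adj_iff_generate)
  then have "generate G {x} \<subseteq> generate G {z}"
    using z by (intro generate_singleton_subset) auto
  moreover have "card (generate G {z}) \<le> card (generate G {x})"
    unfolding generate_pow_card[OF z(1), symmetric] generate_pow_card[OF x, symmetric]
    using z ord_max by blast
  moreover have "finite (generate G {z})"
    using z generate_incl[of "{z}"] by (auto intro: finite_subset[OF _ fin])
  ultimately have "generate G {x} = generate G {z}"
    by (intro card_seteq)
  moreover have "z \<in> generate G {z}"
    by (rule generate.incl) simp
  ultimately show False
    using z by blast
qed

lemma (in group) card_le_twice_nonedges_if_not_cyclic:
  assumes fin: "finite (carrier G)" and "\<not> cyclic_group G"
  shows "card (carrier G) \<le> 2 * card (power_graph_nonedges G)"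
proof -
  obtain x where x: "x \<in> carrier G" and ord_max: "\<And>y. y \<in> carrier G \<Longrightarrow> ord y \<le> ord x"
    using ex_has_greatest_nat[of "\<lambda>y. y \<in> carrier G" \<one> ord "Suc (order G)"]
      ord_le_group_order[OF fin] by (meson le_imp_less_Suc one_closed)
  define C where "C = generate G {x}"
  have C_sub: "C \<subseteq> carrier G"
    unfolding C_def using x generate_incl by blast
  have x_C: "x \<in> C"
    unfolding C_def by (rule generate.incl) simp
  have card_C: "card C = ord x"
    unfolding C_def by (rule generate_pow_card[OF x, symmetric])
  have "C \<noteq> carrier G"
    using assms(2) x unfolding C_def cyclic_group_iff_generate by blast
  then have "card C < card (carrier G)"
    using C_sub fin by (simp add: psubset_card_mono)
  moreover have "card C dvd card (carrier G)"
    unfolding card_C using ord_dvd_group_order[OF x] by (simp add: order_def)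
  ultimately have half: "2 * card C \<le> card (carrier G)"
    by (intro proper_dvd_imp_double_le)
  have "\<not> power_adj G z x" if "z \<in> carrier G" "z \<notin> C" for z
    using that fin x ord_max unfolding C_def by (rule not_power_adj_outside_generate_max_ord)
  then have "card (carrier G - C) * card {x} \<le> card (power_graph_nonedges G)"
    using fin x x_C C_sub by (intro card_le_power_graph_nonedges) auto
  moreover have "card (carrier G - C) = card (carrier G) - card C"
    using C_sub fin by (meson card_Diff_subset finite_subset)
  ultimately show ?thesis
    using half by simp
qed

lemma (in group) cyclic_coprime_factors_le_nonedges:
  assumes fin: "finite (carrier G)" and "cyclic_group G"
    and n: "card (carrier G) = A * B" and "coprime A B"
  shows "(A - 1) * (B - 1) \<le> card (power_graph_nonedges G)"
proof -
  obtain g where g: "g \<in> carrier G" "generate G {g} = carrier G"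
    using assms(2) cyclic_group_iff_generate by blast
  have ord_g: "ord g = A * B"
    using generate_pow_card[OF g(1)] g(2) n by simp
  have "card (carrier G) \<noteq> 0"
    using fin one_closed by (auto simp: card_eq_0_iff)
  then have "A \<noteq> 0" "B \<noteq> 0"
    using n by auto
  define a b where "a = g [^] B" and "b = g [^] A"
  have a: "a \<in> carrier G" "ord a = A"
    unfolding a_def using g(1) ord_pow[OF g(1), of B] ord_g \<open>B \<noteq> 0\<close> by auto
  have b: "b \<in> carrier G" "ord b = B"
    unfolding b_def using g(1) ord_pow[OF g(1), of A] ord_g \<open>A \<noteq> 0\<close> by auto
  have trivial_Int: "generate G {a} \<inter> generate G {b} = {\<one>}"
    using generate_Int_generate_coprime_ord a b assms(4) by simp
  define X Y where "X = generate G {a} - {\<one>}" and "Y = generate G {b} - {\<one>}"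
  have "card (generate G {a}) = A" "card (generate G {b}) = B"
    using generate_pow_card a b by simp_all
  then have card_X: "card X = A - 1" and card_Y: "card Y = B - 1"
    unfolding X_def Y_def by (simp_all add: card_Diff_singleton generate.one)
  have sub: "X \<subseteq> carrier G" "Y \<subseteq> carrier G"
    unfolding X_def Y_def using a(1) b(1) generate_incl by blast+
  have "x \<notin> generate G {y}" if "x \<in> X" "y \<in> Y" for x y
    using that trivial_Int generate_singleton_subset[OF b(1)] unfolding X_def Y_def by blast
  moreover have "y \<notin> generate G {x}" if "x \<in> X" "y \<in> Y" for x y
    using that trivial_Int generate_singleton_subset[OF a(1)] unfolding X_def Y_def by blast
  ultimately have "\<not> power_adj G x y" if "x \<in> X" "y \<in> Y" for x y
    using that sub power_adj_iff_generate by blast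
  moreover have "X \<inter> Y = {}"
    using trivial_Int unfolding X_def Y_def by blast
  ultimately have "card X * card Y \<le> card (power_graph_nonedges G)"
    using fin sub by (intro card_le_power_graph_nonedges)
  then show ?thesis
    unfolding card_X card_Y .
qed

lemma (in group) pow_mem_generate_pow:
  fixes i j :: nat
  assumes g: "g \<in> carrier G" and "gcd j (ord g) dvd i"
  shows "g [^] i \<in> generate G {g [^] j}"
proof -
  obtain u v :: int where uv: "u * int j + v * int (ord g) = int (gcd j (ord g))"
    using bezout_int[of "int j" "int (ord g)"] by auto
  obtain c where c: "i = gcd j (ord g) * c"
    using assms(2) by blast
  have "int j * (u * int c) - int i = int (ord g) * (- v * int c)"
    unfolding c by (simp flip: uv add: algebra_simps)
  then have "int (ord g) dvd int j * (u * int c) - int i"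
    by simp
  then have "g [^] int i = g [^] (int j * (u * int c))"
    using int_pow_eq[OF g] by blast
  also have "\<dots> = (g [^] j) [^] (u * int c)"
    using int_pow_pow[OF g, of "int j" "u * int c"] by (simp add: int_pow_int)
  finally show ?thesis
    using g generate_pow[of "g [^] j"] by (auto simp: int_pow_int)
qed

lemma (in group) cyclic_prime_power_nonedges_empty:
  assumes fin: "finite (carrier G)" and "cyclic_group G"
    and "prime p" and n: "card (carrier G) = p ^ k"
  shows "power_graph_nonedges G = {}"
proof -
  obtain g where g: "g \<in> carrier G" "generate G {g} = carrier G"
    using assms(2) cyclic_group_iff_generate by blast
  have ord_g: "ord g = p ^ k"
    using generate_pow_card[OF g(1)] g(2) n by simp
  have "x \<in> generate G {y} \<or> y \<in> generate G {x}" if xy: "x \<in> carrier G" "y \<in> carrier G" for x y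
  proof -
    obtain i j :: nat where x: "x = g [^] i" and y: "y = g [^] j"
      using xy generate_pow_on_finite_carrier[OF fin g(1)] g(2) by auto
    have "gcd i (ord g) dvd gcd j (ord g) \<or> gcd j (ord g) dvd gcd i (ord g)"
      unfolding ord_g by (rule dvd_prime_power_dvd_total[OF assms(3) gcd_dvd2 gcd_dvd2])
    then show ?thesis
      unfolding x y using pow_mem_generate_pow[OF g(1)] by (meson dvd_trans gcd_dvd1)
  qed
  then show ?thesis
    unfolding power_graph_nonedges_def using power_adj_iff_generate by auto
qed

lemma (in group) prime_power_if_few_nonedges:
  assumes fin: "finite (carrier G)" and "cyclic_group G" and "odd (card (carrier G))"
    and few: "2 * card (power_graph_nonedges G) < card (carrier G) - 1"
  shows "\<exists>p k. prime p \<and> card (carrier G) = p ^ k"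
proof (rule ccontr)
  assume "\<nexists>p k. prime p \<and> card (carrier G) = p ^ k"
  moreover have "card (carrier G) > 1"
    using few by linarith
  ultimately obtain A B where AB: "card (carrier G) = A * B" "coprime A B" "A > 1" "B > 1"
    using not_prime_power_imp_coprime_factors by blast
  have "odd A" "odd B"
    using assms(3) AB(1) by auto
  then have "A \<ge> 3" "B \<ge> 3"
    using AB(3,4) by (auto elim!: oddE)
  then obtain a b where ab: "A = 3 + a" "B = 3 + b"
    using le_Suc_ex by metis
  have "A * B - 1 \<le> 2 * ((A - 1) * (B - 1))"
    unfolding ab by (simp add: algebra_simps)
  moreover have "(A - 1) * (B - 1) \<le> card (power_graph_nonedges G)"
    using cyclic_coprime_factors_le_nonedges[OF fin assms(2) AB(1,2)] .
  ultimately show False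
    using few AB(1) by linarith
qed

theorem mainTheorem1:
  fixes G :: "('a, 'b) monoid_scheme"
  assumes "group G" and "finite (carrier G)"
  shows "power_graph_overfull G \<longleftrightarrow>
    (cyclic_group G \<and> (\<exists>p a::nat. prime p \<and> odd p \<and> a \<ge> 1 \<and> card (carrier G) = p ^ a))"
proof -
  interpret group G by fact
  note fin = assms(2)
  let ?n = "card (carrier G)" and ?N = "card (power_graph_nonedges G)"
  show ?thesis
    unfolding power_graph_overfull_iff[OF fin]
  proof
    assume overfull: "odd ?n \<and> 2 * ?N < ?n - 1"
    then have cyclic: "cyclic_group G"
      using card_le_twice_nonedges_if_not_cyclic[OF fin] by fastforce
    then obtain p a where p: "prime p" "?n = p ^ a"
      using prime_power_if_few_nonedges[OF fin] overfull by blast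
    moreover have "a \<ge> 1"
      using p(2) overfull by (cases a) auto
    ultimately show "cyclic_group G \<and> (\<exists>p a. prime p \<and> odd p \<and> a \<ge> 1 \<and> ?n = p ^ a)"
      using cyclic overfull by auto
  next
    assume "cyclic_group G \<and> (\<exists>p a. prime p \<and> odd p \<and> a \<ge> 1 \<and> ?n = p ^ a)"
    then obtain p a where cyclic: "cyclic_group G" and p: "prime p" "odd p" "a \<ge> 1" "?n = p ^ a"
      by blast
    have "?n > 1"
      using one_less_power[OF prime_gt_1_nat[OF p(1)], of a] p(3,4) by simp
    then show "odd ?n \<and> 2 * ?N < ?n - 1"
      using cyclic_prime_power_nonedges_empty[OF fin cyclic p(1) p(4)] p(2,4) by simp
  qed
qed

end
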